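(* There is an integer $n_1\ge 1$ such that every graph $H$ with $n\ge n_1$ vertices has geometric pebbling threshold at least $\sqrt{n\log 2}$.
   Context: Pebbling: a distribution on a graph assigns a nonnegative integer number of pebbles to each vertex. A pebbling move removes two pebbles from a vertex having at least two pebbles and adds one pebble to an adjacent vertex. A vertex is pebblable if some sequence of pebbling moves from the distribution ends with at least one pebble on it; a distribution is solvable if every vertex is pebblable. The geometric distribution on $\{0,1,2,\dots\}$ with parameter $0<p\le 1$ assigns probability $p(1-p)^k$ to $k$. For a graph $H$ with $n>0$ vertices, the geometric pebbling threshold of $H$ is the unique positive real $x$ such that, if an independent geometrically distributed number of pebbles with parameter $(1+x/n)^{-1}$ is placed on each vertex of $H$, the probability that the distribution is solvable equals $\tfrac12$. $\log$ is the natural logarithm. *)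

theory Defs
  imports "HOL-Probability.Probability"
begin

text \<open>A (finite simple) graph: finite vertex set V (vertices are naturals, so every
finite graph is represented up to isomorphism), symmetric irreflexive edge relation on V.\<close>
definition is_graph :: "nat set \<Rightarrow> (nat \<Rightarrow> nat \<Rightarrow> bool) \<Rightarrow> bool" where
  "is_graph V E \<longleftrightarrow> finite V \<and> (\<forall>u v. E u v \<longrightarrow> u \<in> V \<and> v \<in> V)
     \<and> (\<forall>u v. E u v \<longrightarrow> E v u) \<and> (\<forall>u. \<not> E u u)"

definition pebbling_move :: "(nat \<Rightarrow> nat \<Rightarrow> bool) \<Rightarrow> (nat \<Rightarrow> nat) \<Rightarrow> (nat \<Rightarrow> nat) \<Rightarrow> bool" where
  "pebbling_move E d d' \<longleftrightarrow>
     (\<exists>u v. E u v \<and> 2 \<le> d u \<and> d' = d(u := d u - 2, v := d v + 1))"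

definition pebblable :: "(nat \<Rightarrow> nat \<Rightarrow> bool) \<Rightarrow> (nat \<Rightarrow> nat) \<Rightarrow> nat \<Rightarrow> bool" where
  "pebblable E d r \<longleftrightarrow> (\<exists>d'. (pebbling_move E)\<^sup>*\<^sup>* d d' \<and> 1 \<le> d' r)"

definition solvable :: "nat set \<Rightarrow> (nat \<Rightarrow> nat \<Rightarrow> bool) \<Rightarrow> (nat \<Rightarrow> nat) \<Rightarrow> bool" where
  "solvable V E d \<longleftrightarrow> (\<forall>r\<in>V. pebblable E d r)"

definition solvable_prob :: "nat set \<Rightarrow> (nat \<Rightarrow> nat \<Rightarrow> bool) \<Rightarrow> real \<Rightarrow> real" where
  "solvable_prob V E p =
     measure_pmf.prob (Pi_pmf V 0 (\<lambda>_. geometric_pmf p)) {d. solvable V E d}"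

definition geom_threshold :: "nat set \<Rightarrow> (nat \<Rightarrow> nat \<Rightarrow> bool) \<Rightarrow> real" where
  "geom_threshold V E =
     (THE x. 0 < x \<and> solvable_prob V E (inverse (1 + x / real (card V))) = 1/2)"

end

theory Submission
  imports Defs
begin

text \<open>Write \<open>q = x/(n + x)\<close>, so that every vertex independently carries at least
\<open>k\<close> pebbles with probability \<open>q\<^sup>k\<close>. The set of solvable distributions is upward closed,
so its probability increases strictly and continuously in \<open>q\<close>; hence the threshold is
well defined and it suffices to show that the success probability is below \<open>1/2\<close> whenever
\<open>x\<^sup>2 < n log 2\<close>. A distribution with at most one pebble per vertex admits no move, so it is
solvable only if every vertex carries exactly one pebble. This bounds the success
probability by \<open>1 - (1 - q\<^sup>2)\<^sup>n + (q(1 - q))\<^sup>n\<close>. Finally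
\<open>(1 - q\<^sup>2)\<^sup>n \<ge> exp (-x\<^sup>2/(n + 2x))\<close>, which for \<open>x\<^sup>2 < n log 2\<close> exceeds \<open>1/2\<close> by more than
\<open>q\<^sup>3 \<ge> (q(1 - q))\<^sup>n\<close> once \<open>n \<ge> 3\<close>.\<close>

lemma suminf_less:
  fixes f g :: "nat \<Rightarrow> real"
  assumes "summable f" "summable g" "\<And>n. f n \<le> g n" "f i < g i"
  shows "suminf f < suminf g"
proof -
  have "0 < suminf (\<lambda>n. g n - f n)"
    using assms by (subst suminf_pos_iff) (auto intro: summable_diff)
  also have "suminf (\<lambda>n. g n - f n) = suminf g - suminf f"
    using assms by (intro suminf_diff[symmetric]) auto
  finally show ?thesis by simp
qed

lemma summable_geometric_times_bounded:
  fixes a :: "nat \<Rightarrow> real"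
  assumes "0 \<le> q" "q < 1" "\<And>k. \<bar>a k\<bar> \<le> 1"
  shows "summable (\<lambda>k. q ^ k * a k)"
proof (rule summable_comparison_test[of _ "\<lambda>k. q ^ k"])
  show "\<exists>N. \<forall>n\<ge>N. norm (q ^ n * a n) \<le> q ^ n"
    using assms by (auto simp: abs_mult intro!: mult_left_le)
  show "summable (\<lambda>k. q ^ k)" using assms by (intro summable_geometric) auto
qed

text \<open>Summation by parts; \<open>q\<^sup>k\<^sup>+\<^sup>1\<close> is the probability that a geometric variable exceeds \<open>k\<close>.\<close>

lemma geometric_average_tail_sums:
  fixes a :: "nat \<Rightarrow> real"
  assumes "0 \<le> q" "q < 1" "\<And>k. \<bar>a k\<bar> \<le> 1"
  shows "(\<lambda>k. q ^ Suc k * (a (Suc k) - a k)) sums ((\<Sum>k. (1 - q) * q ^ k * a k) - a 0)"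
proof -
  define A where "A = (\<Sum>k. q ^ k * a k)"
  have A: "(\<lambda>k. q ^ k * a k) sums A"
    unfolding A_def using summable_geometric_times_bounded[OF assms] by (rule summable_sums)
  have shifted: "(\<lambda>k. q ^ Suc k * a (Suc k)) sums (A - a 0)"
    using A by (subst sums_Suc_iff) simp
  have scaled: "(\<lambda>k. q ^ Suc k * a k) sums (q * A)"
    using sums_mult[OF A, of q] by (simp add: mult.assoc)
  have "(\<lambda>k. q ^ Suc k * (a (Suc k) - a k)) sums (A - a 0 - q * A)"
    using sums_diff[OF shifted scaled] by (simp add: right_diff_distrib)
  moreover have "(\<Sum>k. (1 - q) * q ^ k * a k) = (1 - q) * A"
    using sums_unique[OF sums_mult[OF A, of "1 - q"]] by (simp add: mult.assoc)
  moreover have "A - a 0 - q * A = (1 - q) * A - a 0"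
    by (simp add: algebra_simps)
  ultimately show ?thesis by simp
qed

lemma geometric_average_mono:
  fixes a :: "nat \<Rightarrow> real"
  assumes "0 \<le> q" "q \<le> q'" "q' < 1" "\<And>k. 0 \<le> a k" "\<And>k. a k \<le> 1" "incseq a"
  shows "(\<Sum>k. (1 - q) * q ^ k * a k) \<le> (\<Sum>k. (1 - q') * q' ^ k * a k)"
    and "q < q' \<Longrightarrow> a i < a (Suc i) \<Longrightarrow>
      (\<Sum>k. (1 - q) * q ^ k * a k) < (\<Sum>k. (1 - q') * q' ^ k * a k)"
proof -
  have bounded: "\<And>k. \<bar>a k\<bar> \<le> 1" using assms by (simp add: abs_le_iff)
  have step: "a k \<le> a (Suc k)" for k using \<open>incseq a\<close> by (simp add: incseq_SucD)
  have "(\<lambda>k. q' ^ Suc k * (a (Suc k) - a k) - q ^ Suc k * (a (Suc k) - a k))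
    sums (((\<Sum>k. (1 - q') * q' ^ k * a k) - a 0) - ((\<Sum>k. (1 - q) * q ^ k * a k) - a 0))"
    using assms bounded
    by (intro sums_diff geometric_average_tail_sums) auto
  then have diff: "(\<lambda>k. (q' ^ Suc k - q ^ Suc k) * (a (Suc k) - a k))
    sums ((\<Sum>k. (1 - q') * q' ^ k * a k) - (\<Sum>k. (1 - q) * q ^ k * a k))"
    by (simp add: left_diff_distrib)
  have nonneg: "0 \<le> (q' ^ Suc k - q ^ Suc k) * (a (Suc k) - a k)" for k
    using assms step[of k] power_mono[of q q' "Suc k"] by (intro mult_nonneg_nonneg) auto
  show "(\<Sum>k. (1 - q) * q ^ k * a k) \<le> (\<Sum>k. (1 - q') * q' ^ k * a k)"
    using sums_le[OF nonneg sums_zero diff] by simp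
  assume "q < q'" "a i < a (Suc i)"
  then have "0 < (q' ^ Suc i - q ^ Suc i) * (a (Suc i) - a i)"
    using assms power_strict_mono[of q q' "Suc i"] by (intro mult_pos_pos) auto
  then have "0 < (\<Sum>k. (q' ^ Suc k - q ^ Suc k) * (a (Suc k) - a k))"
    using diff nonneg by (intro suminf_pos2[of _ i]) (auto simp: sums_iff)
  with diff show "(\<Sum>k. (1 - q) * q ^ k * a k) < (\<Sum>k. (1 - q') * q' ^ k * a k)"
    by (simp add: sums_iff)
qed

definition geom_prob :: "nat set \<Rightarrow> real \<Rightarrow> (nat \<Rightarrow> nat) set \<Rightarrow> real" where
  "geom_prob V q S = measure_pmf.prob (Pi_pmf V 0 (\<lambda>_. geometric_pmf (1 - q))) S"

definition upward_closed :: "(nat \<Rightarrow> nat) set \<Rightarrow> bool" where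
  "upward_closed S \<longleftrightarrow> (\<forall>d d'. d \<in> S \<longrightarrow> (\<forall>w. d w \<le> d' w) \<longrightarrow> d' \<in> S)"

lemma geom_prob_nonneg: "0 \<le> geom_prob V q S"
  by (simp add: geom_prob_def)

lemma geom_prob_le_1: "geom_prob V q S \<le> 1"
  by (simp add: geom_prob_def)

lemma geom_prob_empty: "geom_prob {} q S = (if (\<lambda>_. 0) \<in> S then 1 else 0)"
  by (simp add: geom_prob_def)

lemma geom_prob_mono_set: "S \<subseteq> T \<Longrightarrow> geom_prob V q S \<le> geom_prob V q T"
  unfolding geom_prob_def by (intro measure_pmf.finite_measure_mono) auto

lemma geom_prob_Pi:
  "finite V \<Longrightarrow> geom_prob V q (Pi V (\<lambda>_. B)) = measure_pmf.prob (geometric_pmf (1 - q)) B ^ card V"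
  unfolding geom_prob_def by (simp add: measure_Pi_pmf_Pi)

lemma measure_pmf_sums_nat:
  fixes G :: "nat pmf" and F :: "nat \<Rightarrow> 'a pmf"
  shows "(\<lambda>k. pmf G k * measure_pmf.prob (F k) T) sums measure_pmf.prob (bind_pmf G F) T"
proof -
  have "summable (pmf G)"
    using pmf_abs_summable[of G UNIV] by (simp add: abs_summable_on_nat_iff' pmf_nonneg)
  then have summable: "summable (\<lambda>k. pmf G k * measure_pmf.prob (F k) T)"
    by (rule summable_comparison_test[rotated])
       (auto intro!: exI[of _ 0] mult_left_le simp: pmf_nonneg)
  have "emeasure (bind_pmf G F) T = (\<integral>\<^sup>+k. ennreal (pmf G k) * emeasure (F k) T \<partial>count_space UNIV)"
    by (simp add: nn_integral_measure_pmf)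
  also have "\<dots> = (\<Sum>k. ennreal (pmf G k * measure_pmf.prob (F k) T))"
    by (simp add: nn_integral_count_space_nat measure_pmf.emeasure_eq_measure ennreal_mult pmf_nonneg)
  also have "\<dots> = ennreal (\<Sum>k. pmf G k * measure_pmf.prob (F k) T)"
    using summable by (intro suminf_ennreal2) (auto simp: pmf_nonneg)
  finally show ?thesis
    using summable by (simp add: measure_pmf.emeasure_eq_measure suminf_nonneg pmf_nonneg summable_sums)
qed

lemma geom_prob_insert_sums:
  assumes "finite V" "x \<notin> V" "0 \<le> q" "q < 1"
  shows "(\<lambda>k. (1 - q) * q ^ k * geom_prob V q {f. f(x := k) \<in> S}) sums geom_prob (insert x V) q S"
proof -
  let ?G = "geometric_pmf (1 - q)"
  let ?P = "Pi_pmf V 0 (\<lambda>_. geometric_pmf (1 - q))"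
  have "geom_prob (insert x V) q S = measure_pmf.prob (pair_pmf ?G ?P) ((\<lambda>(k, f). f(x := k)) -` S)"
    unfolding geom_prob_def using assms by (simp add: Pi_pmf_insert)
  also have "pair_pmf ?G ?P = bind_pmf ?G (\<lambda>k. map_pmf (Pair k) ?P)"
    by (simp add: pair_pmf_def map_pmf_def)
  finally have "geom_prob (insert x V) q S
      = measure_pmf.prob (bind_pmf ?G (\<lambda>k. map_pmf (Pair k) ?P)) ((\<lambda>(k, f). f(x := k)) -` S)" .
  moreover have "pmf ?G k * measure_pmf.prob (map_pmf (Pair k) ?P) ((\<lambda>(k, f). f(x := k)) -` S)
      = (1 - q) * q ^ k * geom_prob V q {f. f(x := k) \<in> S}" for k
    using assms by (simp add: geom_prob_def vimage_def)
  ultimately show ?thesis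
    using measure_pmf_sums_nat[of ?G "\<lambda>k. map_pmf (Pair k) ?P" "(\<lambda>(k, f). f(x := k)) -` S"]
    by simp
qed

lemma upward_closed_section:
  assumes "upward_closed S"
  shows "upward_closed {f. f(x := k) \<in> S}"
  unfolding upward_closed_def
proof (intro allI impI)
  fix f g assume "f \<in> {f. f(x := k) \<in> S}" "\<forall>w. f w \<le> g w"
  moreover have "\<forall>w. (f(x := k)) w \<le> (g(x := k)) w" using calculation by simp
  ultimately show "g \<in> {f. f(x := k) \<in> S}" using assms unfolding upward_closed_def by blast
qed

lemma upward_closed_section_mono:
  assumes "upward_closed S"
  shows "{f. f(x := k) \<in> S} \<subseteq> {f. f(x := Suc k) \<in> S}"
proof
  fix f assume "f \<in> {f. f(x := k) \<in> S}"
  moreover have "\<forall>w. (f(x := k)) w \<le> (f(x := Suc k)) w" by simp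
  ultimately show "f \<in> {f. f(x := Suc k) \<in> S}" using assms unfolding upward_closed_def by blast
qed

lemma geom_prob_section_incseq:
  "upward_closed S \<Longrightarrow> incseq (\<lambda>k. geom_prob V q {f. f(x := k) \<in> S})"
  by (intro incseq_SucI geom_prob_mono_set upward_closed_section_mono)

lemma summable_geometric_average:
  fixes a :: "nat \<Rightarrow> real"
  assumes "0 \<le> q" "q < 1" "\<And>k. 0 \<le> a k" "\<And>k. a k \<le> 1"
  shows "summable (\<lambda>k. (1 - q) * q ^ k * a k)"
  using summable_mult[OF summable_geometric_times_bounded[of q a], of "1 - q"] assms
  by (simp add: mult.assoc abs_le_iff)

lemma geom_prob_pos:
  assumes "finite V" "0 < q" "q < 1" "d \<in> S" "\<forall>w. w \<notin> V \<longrightarrow> d w = 0"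
  shows "0 < geom_prob V q S"
proof -
  have "pmf (Pi_pmf V 0 (\<lambda>_. geometric_pmf (1 - q))) d = (\<Prod>v\<in>V. (1 - q) * q ^ d v)"
    using assms by (subst pmf_Pi') (auto simp: mult.commute)
  also have "\<dots> > 0" using assms by (intro prod_pos) auto
  finally have "0 < geom_prob V q {d}"
    by (simp add: geom_prob_def measure_pmf_single)
  also have "\<dots> \<le> geom_prob V q S"
    using assms by (intro geom_prob_mono_set) auto
  finally show ?thesis .
qed

lemma geom_prob_eq_0:
  assumes "finite V" "\<And>d. d \<in> S \<Longrightarrow> \<exists>w. w \<notin> V \<and> d w \<noteq> 0"
  shows "geom_prob V q S = 0"
proof -
  have "set_pmf (Pi_pmf V 0 (\<lambda>_. geometric_pmf (1 - q))) \<inter> S = {}"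
    using set_Pi_pmf_subset[OF assms(1), of 0] assms(2) by fastforce
  then show ?thesis
    unfolding geom_prob_def by (simp add: measure_pmf_zero_iff)
qed

lemma geom_prob_mono:
  assumes "finite V" "upward_closed S" "0 \<le> q" "q \<le> q'" "q' < 1"
  shows "geom_prob V q S \<le> geom_prob V q' S"
  using assms(1,2)
proof (induction V arbitrary: S rule: finite_induct)
  case empty
  then show ?case by (simp add: geom_prob_empty)
next
  case (insert x F)
  define a where "a t k = geom_prob F t {f. f(x := k) \<in> S}" for t k
  have sums: "(\<lambda>k. (1 - t) * t ^ k * a t k) sums geom_prob (insert x F) t S" if "0 \<le> t" "t < 1" for t
    unfolding a_def using insert that by (intro geom_prob_insert_sums) auto
  have "geom_prob (insert x F) q S \<le> (\<Sum>k. (1 - q) * q ^ k * a q' k)"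
  proof (rule sums_le[OF _ sums summable_sums])
    show "(1 - q) * q ^ k * a q k \<le> (1 - q) * q ^ k * a q' k" for k
      unfolding a_def using assms insert upward_closed_section
      by (intro mult_left_mono) auto
    show "summable (\<lambda>k. (1 - q) * q ^ k * a q' k)"
      using assms by (intro summable_geometric_average) (auto simp: a_def geom_prob_nonneg geom_prob_le_1)
  qed (use assms in auto)
  also have "\<dots> \<le> (\<Sum>k. (1 - q') * q' ^ k * a q' k)"
    using assms insert
    by (intro geometric_average_mono(1)) (auto simp: a_def geom_prob_nonneg geom_prob_le_1 geom_prob_section_incseq)
  also have "\<dots> = geom_prob (insert x F) q' S"
    using sums assms by (simp add: sums_iff)
  finally show ?case .
qed

lemma geom_prob_strict_mono:
  assumes "finite V" "upward_closed S" "(\<lambda>_. 0) \<notin> S" "d \<in> S" "\<forall>w. w \<notin> V \<longrightarrow> d w = 0"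
    and q: "0 \<le> q" "q < q'" "q' < 1"
  shows "geom_prob V q S < geom_prob V q' S"
  using assms(1-5)
proof (induction V arbitrary: S d rule: finite_induct)
  case empty
  then have "d = (\<lambda>_. 0)" by auto
  with empty show ?case by simp
next
  case (insert x F)
  define a where "a t k = geom_prob F t {f. f(x := k) \<in> S}" for t k
  have a_bounds: "0 \<le> a t k" "a t k \<le> 1" for t k
    by (simp_all add: a_def geom_prob_nonneg geom_prob_le_1)
  have sums: "(\<lambda>k. (1 - t) * t ^ k * a t k) sums geom_prob (insert x F) t S" if "0 \<le> t" "t < 1" for t
    unfolding a_def using insert that by (intro geom_prob_insert_sums) auto
  have summable: "summable (\<lambda>k. (1 - q) * q ^ k * a t k)" for t
    using q a_bounds by (intro summable_geometric_average) auto
  have sections_le: "(1 - q) * q ^ k * a q k \<le> (1 - q) * q ^ k * a q' k" for k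
    unfolding a_def using q insert upward_closed_section
    by (intro mult_left_mono geom_prob_mono) auto
  have incseq: "incseq (a q')"
    unfolding a_def using insert by (intro geom_prob_section_incseq)
  txt \<open>Either the section at \<open>0\<close> already gains probability, or it is null and the
    sections at \<open>q'\<close> increase somewhere, so that the geometric average gains.\<close>
  have "(\<Sum>k. (1 - q) * q ^ k * a q k) < (\<Sum>k. (1 - q') * q' ^ k * a q' k)"
  proof (cases "\<exists>f. f(x := 0) \<in> S \<and> (\<forall>w. w \<notin> F \<longrightarrow> f w = 0)")
    case True
    then obtain f where f: "f(x := 0) \<in> S" "\<forall>w. w \<notin> F \<longrightarrow> f w = 0" by blast
    have "(\<lambda>_. 0::nat)(x := 0) = (\<lambda>_. 0)" by auto
    then have "a q 0 < a q' 0"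
      unfolding a_def using insert f upward_closed_section by (intro insert.IH[of _ f]) auto
    then have "(\<Sum>k. (1 - q) * q ^ k * a q k) < (\<Sum>k. (1 - q) * q ^ k * a q' k)"
      using q by (intro suminf_less[OF summable summable sections_le, of 0]) auto
    also have "\<dots> \<le> (\<Sum>k. (1 - q') * q' ^ k * a q' k)"
      using q a_bounds incseq by (intro geometric_average_mono(1)) auto
    finally show ?thesis .
  next
    case False
    then have "a q' 0 = 0"
      unfolding a_def using insert by (intro geom_prob_eq_0) auto
    moreover have "0 < a q' (d x)"
      unfolding a_def using insert q by (intro geom_prob_pos[where d="d(x := 0)"]) auto
    ultimately obtain i where i: "a q' i < a q' (Suc i)"
      by (metis decseqD decseq_SucI not_le zero_le)
    have "(\<Sum>k. (1 - q) * q ^ k * a q k) \<le> (\<Sum>k. (1 - q) * q ^ k * a q' k)"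
      by (rule suminf_le[OF sections_le summable summable])
    also have "\<dots> < (\<Sum>k. (1 - q') * q' ^ k * a q' k)"
      using q a_bounds incseq i by (intro geometric_average_mono(2)) auto
    finally show ?thesis .
  qed
  then show ?case
    using sums q by (simp add: sums_iff)
qed

lemma geom_prob_continuous_on:
  assumes "finite V"
  shows "continuous_on {0<..<1} (\<lambda>q. geom_prob V q S)"
  using assms
proof (induction V arbitrary: S rule: finite_induct)
  case empty
  then show ?case by (simp add: geom_prob_empty)
next
  case (insert x F)
  define a where "a k t = geom_prob F t {f. f(x := k) \<in> S}" for k t
  have "continuous_on {0<..<r} (\<lambda>q. geom_prob (insert x F) q S)" if r: "r \<in> {0<..<1}" for r
  proof -
    have "uniform_limit {0<..<r} (\<lambda>n t. \<Sum>k<n. (1 - t) * t ^ k * a k t)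
        (\<lambda>t. \<Sum>k. (1 - t) * t ^ k * a k t) sequentially"
    proof (rule Weierstrass_m_test[of _ _ "\<lambda>k. r ^ k"])
      fix k t assume t: "t \<in> {0<..<r}"
      have "\<bar>(1 - t) * t ^ k * a k t\<bar> = (1 - t) * t ^ k * a k t"
        using t r by (auto simp: a_def geom_prob_nonneg)
      also have "\<dots> \<le> 1 * t ^ k * 1"
        using t r by (intro mult_mono) (auto simp: a_def geom_prob_nonneg geom_prob_le_1)
      also have "\<dots> \<le> r ^ k" using t by (auto intro: power_mono)
      finally show "norm ((1 - t) * t ^ k * a k t) \<le> r ^ k" by simp
    qed (use r in \<open>auto intro: summable_geometric\<close>)
    moreover have "continuous_on {0<..<r} (a k)" for k
      unfolding a_def using r by (intro continuous_on_subset[OF insert.IH]) auto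
    ultimately have "continuous_on {0<..<r} (\<lambda>t. \<Sum>k. (1 - t) * t ^ k * a k t)"
      by (intro uniform_limit_theorem) (auto intro!: always_eventually continuous_intros)
    moreover have "(\<Sum>k. (1 - t) * t ^ k * a k t) = geom_prob (insert x F) t S" if "t \<in> {0<..<r}" for t
      using geom_prob_insert_sums[of F x t S] insert that r unfolding a_def by (auto simp: sums_iff)
    ultimately show ?thesis
      by (rule continuous_on_eq)
  qed
  then have "continuous_on (\<Union>r\<in>{0<..<1::real}. {0<..<r}) (\<lambda>q. geom_prob (insert x F) q S)"
    by (intro continuous_on_open_UN) auto
  moreover have "(\<Union>r\<in>{0<..<1::real}. {0<..<r}) = {0<..<1}"
  proof (intro equalityI subsetI)
    fix t :: real assume "t \<in> {0<..<1}"
    then show "t \<in> (\<Union>r\<in>{0<..<1}. {0<..<r})"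
      by (intro UN_I[of "(t + 1) / 2"]) auto
  qed auto
  ultimately show ?case by simp
qed

lemma pebbling_move_mono:
  assumes "pebbling_move E d e" "\<forall>w. d w \<le> d' w"
  shows "\<exists>e'. pebbling_move E d' e' \<and> (\<forall>w. e w \<le> e' w)"
proof -
  obtain u v where uv: "E u v" "2 \<le> d u" "e = d(u := d u - 2, v := d v + 1)"
    using assms(1) unfolding pebbling_move_def by blast
  define e' where "e' = d'(u := d' u - 2, v := d' v + 1)"
  have "2 \<le> d' u" using uv assms(2) by (metis order_trans)
  then have "pebbling_move E d' e'" unfolding pebbling_move_def e'_def using uv by blast
  moreover have "\<forall>w. e w \<le> e' w" unfolding uv e'_def using assms(2)
    by (auto simp: diff_le_mono)
  ultimately show ?thesis by blast
qed

lemma pebbling_moves_mono: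
  assumes "(pebbling_move E)\<^sup>*\<^sup>* d e" "\<forall>w. d w \<le> d' w"
  shows "\<exists>e'. (pebbling_move E)\<^sup>*\<^sup>* d' e' \<and> (\<forall>w. e w \<le> e' w)"
  using assms(1)
proof (induction rule: rtranclp_induct)
  case base
  then show ?case using assms(2) by blast
next
  case (step y z)
  then obtain y' where y': "(pebbling_move E)\<^sup>*\<^sup>* d' y'" "\<forall>w. y w \<le> y' w" by blast
  then obtain z' where "pebbling_move E y' z'" "\<forall>w. z w \<le> z' w"
    using pebbling_move_mono step(2) by blast
  then show ?case using y' by (meson rtranclp.rtrancl_into_rtrancl)
qed

lemma upward_closed_solvable: "upward_closed {d. solvable V E d}"
  unfolding upward_closed_def
proof (intro allI impI)
  fix d d' assume solvable: "d \<in> {d. solvable V E d}" and le: "\<forall>w. d w \<le> d' w"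
  have "pebblable E d' r" if "r \<in> V" for r
  proof -
    obtain e where e: "(pebbling_move E)\<^sup>*\<^sup>* d e" "1 \<le> e r"
      using solvable \<open>r \<in> V\<close> unfolding solvable_def pebblable_def by blast
    then obtain e' where "(pebbling_move E)\<^sup>*\<^sup>* d' e'" "e r \<le> e' r"
      using pebbling_moves_mono[OF e(1) le] by blast
    with e(2) show ?thesis unfolding pebblable_def by (blast intro: order_trans)
  qed
  then show "d' \<in> {d. solvable V E d}" by (simp add: solvable_def)
qed

lemma pebbling_moves_from_at_most_one:
  assumes "is_graph V E" "\<forall>v\<in>V. d v \<le> 1" "(pebbling_move E)\<^sup>*\<^sup>* d e"
  shows "e = d"
  using assms(3)
proof (induction rule: rtranclp_induct)
  case (step y z)
  then obtain u v where "E u v" "2 \<le> y u" by (auto simp: pebbling_move_def)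
  moreover have "u \<in> V" using assms(1) calculation unfolding is_graph_def by blast
  ultimately show ?case using assms(2) step by auto
qed simp

lemma not_solvable_at_most_one:
  assumes "is_graph V E" "\<forall>v\<in>V. d v \<le> 1" "v \<in> V" "d v = 0"
  shows "\<not> solvable V E d"
proof
  assume "solvable V E d"
  then obtain e where moves: "(pebbling_move E)\<^sup>*\<^sup>* d e" and "1 \<le> e v"
    using assms(3) unfolding solvable_def pebblable_def by blast
  moreover have "e = d" using moves by (rule pebbling_moves_from_at_most_one[OF assms(1,2)])
  ultimately show False using assms(4) by simp
qed

lemma solvable_if_all_pos: "\<forall>v\<in>V. 1 \<le> d v \<Longrightarrow> solvable V E d"
  unfolding solvable_def pebblable_def by blast

lemma measure_geometric_atMost_1:
  "0 \<le> q \<Longrightarrow> q < 1 \<Longrightarrow> measure_pmf.prob (geometric_pmf (1 - q)) {..1} = 1 - q\<^sup>2"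
  by (subst measure_measure_pmf_finite) (auto simp: power2_eq_square algebra_simps atMost_Suc)

lemma measure_geometric_atLeast_1:
  assumes "0 \<le> q" "q < 1"
  shows "measure_pmf.prob (geometric_pmf (1 - q)) {1..} = q"
proof -
  have "{1..} = UNIV - {0::nat}" by auto
  then show ?thesis
    using measure_pmf.prob_compl[of "{0::nat}" "geometric_pmf (1 - q)"] assms
    by (simp add: measure_pmf_single)
qed

lemma geom_prob_solvable_le:
  assumes "is_graph V E" "0 \<le> q" "q < 1"
  shows "geom_prob V q {d. solvable V E d} \<le> 1 - ((1 - q\<^sup>2) ^ card V - ((1 - q) * q) ^ card V)"
proof -
  define A where "A = Pi V (\<lambda>_::nat. {..1::nat})"
  define B where "B = Pi V (\<lambda>_::nat. {1::nat})"
  have fin: "finite V" using assms(1) unfolding is_graph_def by blast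
  have "B \<subseteq> A" unfolding A_def B_def by (auto simp: Pi_iff)
  have "{d. solvable V E d} \<subseteq> UNIV - (A - B)"
  proof
    fix d assume "d \<in> {d. solvable V E d}"
    then have "\<not> ((\<forall>v\<in>V. d v \<le> 1) \<and> (\<exists>v\<in>V. d v = 0))"
      using not_solvable_at_most_one[OF assms(1)] by blast
    then show "d \<in> UNIV - (A - B)"
      unfolding A_def B_def by (auto simp: Pi_iff le_Suc_eq)
  qed
  then have "geom_prob V q {d. solvable V E d} \<le> geom_prob V q (UNIV - (A - B))"
    by (rule geom_prob_mono_set)
  also have "\<dots> = 1 - (geom_prob V q A - geom_prob V q B)"
    using \<open>B \<subseteq> A\<close> unfolding geom_prob_def
    by (simp add: measure_pmf.prob_compl measure_pmf.finite_measure_Diff)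
  also have "geom_prob V q A = (1 - q\<^sup>2) ^ card V"
    using geom_prob_Pi[OF fin, of q "{..1}"] measure_geometric_atMost_1 assms unfolding A_def by simp
  also have "geom_prob V q B = ((1 - q) * q) ^ card V"
    using geom_prob_Pi[OF fin, of q "{1}"] assms unfolding B_def by (simp add: measure_pmf_single mult.commute)
  finally show ?thesis .
qed

lemma geom_prob_solvable_ge:
  assumes "finite V" "0 \<le> q" "q < 1"
  shows "q ^ card V \<le> geom_prob V q {d. solvable V E d}"
proof -
  have "q ^ card V = geom_prob V q (Pi V (\<lambda>_. {1..}))"
    using geom_prob_Pi[OF assms(1), of q "{1..}"] measure_geometric_atLeast_1 assms by simp
  also have "\<dots> \<le> geom_prob V q {d. solvable V E d}"
    by (intro geom_prob_mono_set) (auto simp: Pi_iff intro!: solvable_if_all_pos)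
  finally show ?thesis .
qed

lemma ln_2_gt_half: "1/2 < ln (2::real)"
proof -
  have "exp (1/2::real) ^ 2 = exp 1" by (simp flip: exp_of_nat_mult)
  also have "\<dots> < 2 ^ 2" using exp_le by simp
  finally have "exp (1/2::real) < 2"
    by (rule power_less_imp_less_base) simp
  then show ?thesis by (metis exp_gt_zero exp_ln exp_less_cancel_iff ln_exp zero_less_numeral)
qed

lemma exp_le_one_minus_sq_pow:
  fixes x :: real and N :: nat
  defines "q \<equiv> x / (real N + x)"
  assumes "0 < N" "0 < x"
  shows "exp (- (x\<^sup>2 / (real N + 2 * x))) \<le> (1 - q\<^sup>2) ^ N"
proof -
  define n where "n = real N"
  have n: "0 < n" using assms unfolding n_def by simp
  have qx: "q * (n + x) = x" unfolding q_def n_def using assms by simp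
  have "(1 - q\<^sup>2) * (n + x)\<^sup>2 = (n + x)\<^sup>2 - (q * (n + x))\<^sup>2"
    by (simp add: algebra_simps power2_eq_square)
  also have "\<dots> = n * (n + 2 * x)"
    unfolding qx by (simp add: algebra_simps power2_eq_square)
  finally have factor: "1 - q\<^sup>2 = n * (n + 2 * x) / (n + x)\<^sup>2"
    using assms n by (simp add: eq_divide_eq)
  then have pos: "0 < 1 - q\<^sup>2" using assms n by simp
  have "ln (inverse (1 - q\<^sup>2)) \<le> inverse (1 - q\<^sup>2) - 1"
    using pos by (intro ln_le_minus_one) simp
  then have "real N * (1 - inverse (1 - q\<^sup>2)) \<le> real N * ln (1 - q\<^sup>2)"
    by (intro mult_left_mono) (simp_all add: ln_inverse)
  moreover have "real N * (1 - inverse (1 - q\<^sup>2)) = - (x\<^sup>2 / (n + 2 * x))"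
  proof -
    have "n * (n + 2 * x) - (n + x)\<^sup>2 = - x\<^sup>2"
      by (simp add: algebra_simps power2_eq_square)
    moreover have "1 - inverse (1 - q\<^sup>2) = (n * (n + 2 * x) - (n + x)\<^sup>2) / (n * (n + 2 * x))"
      unfolding factor using assms n by (simp add: diff_divide_distrib)
    ultimately have "1 - inverse (1 - q\<^sup>2) = - x\<^sup>2 / (n * (n + 2 * x))"
      by simp
    then show ?thesis
      unfolding n_def[symmetric] using n by simp
  qed
  ultimately have "- (x\<^sup>2 / (n + 2 * x)) \<le> real N * ln (1 - q\<^sup>2)"
    by simp
  then have "exp (- (x\<^sup>2 / (n + 2 * x))) \<le> exp (real N * ln (1 - q\<^sup>2))"
    by simp
  also have "\<dots> = (1 - q\<^sup>2) ^ N"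
    using pos by (simp add: exp_of_nat_mult)
  finally show ?thesis unfolding n_def .
qed

lemma solvable_bound_less_half:
  fixes x :: real and N :: nat
  defines "q \<equiv> x / (real N + x)"
  assumes N: "3 \<le> N" and x: "0 < x" "x\<^sup>2 < real N * ln 2"
  shows "1 - ((1 - q\<^sup>2) ^ N - ((1 - q) * q) ^ N) < 1/2"
proof -
  define n where "n = real N"
  define s where "s = 2 * x * ln 2 / (n + 2 * x)"
  have n: "3 \<le> n" using N unfolding n_def by simp
  have ln2: "1/2 < ln (2::real)" "ln (2::real) < 1" using ln_2_gt_half ln_2_less_1 by auto
  have "n * ln 2 < n * 1" using ln2 n by (intro mult_strict_left_mono) auto
  moreover have "n * 1 \<le> n * n" using n by (intro mult_left_mono) auto
  ultimately have "x\<^sup>2 < n\<^sup>2" using x(2) unfolding n_def[symmetric] by (simp add: power2_eq_square)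
  then have "x < n" using n by (intro power_less_imp_less_base[of x 2 n]) auto
  then have q: "0 < q" "q \<le> 1/2" using x n unfolding q_def n_def by (auto simp: field_simps)
  txt \<open>No vertex carries two pebbles with probability above \<open>1/2 + s/2\<close> \<dots>\<close>
  have "x\<^sup>2 / (n + 2 * x) < ln 2 - s"
  proof -
    have "(n + 2 * x) * x\<^sup>2 < (n + 2 * x) * (n * ln 2)"
      using x n unfolding n_def by (intro mult_strict_left_mono) auto
    then show ?thesis unfolding s_def using x n by (simp add: field_simps)
  qed
  then have "exp (s - ln 2) < exp (- (x\<^sup>2 / (n + 2 * x)))"
    by simp
  then have "exp s / 2 < exp (- (x\<^sup>2 / (n + 2 * x)))"
    by (simp add: exp_diff)
  also have "\<dots> \<le> (1 - q\<^sup>2) ^ N"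
    using exp_le_one_minus_sq_pow[of N x] N x unfolding q_def n_def by simp
  finally have lower: "1/2 + s/2 < (1 - q\<^sup>2) ^ N"
    using exp_ge_add_one_self[of s] by linarith
  txt \<open>\<dots> while every vertex carries exactly one pebble with probability at most
    \<open>q\<^sup>3 \<le> s/2\<close>.\<close>
  have "((1 - q) * q) ^ N \<le> q ^ 3"
  proof -
    have "((1 - q) * q) ^ N \<le> q ^ N" using q by (intro power_mono) auto
    also have "\<dots> \<le> q ^ 3" using q N by (intro power_decreasing) auto
    finally show ?thesis .
  qed
  also have "\<dots> \<le> q / 4"
    using q mult_mono[of q "1/2" q "1/2"] by (simp add: power3_eq_cube)
  also have "\<dots> \<le> s / 2"
  proof -
    have "2 * (n + x) \<le> (4 * ln 2) * (n + x)"
      using ln2 x n by (intro mult_right_mono) auto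
    then have "n + 2 * x \<le> 4 * ln 2 * (n + x)"
      using n by simp
    then have "x * (n + 2 * x) \<le> x * (4 * ln 2 * (n + x))" using x by (intro mult_left_mono) auto
    then show ?thesis unfolding q_def s_def n_def[symmetric] using x n by (simp add: field_simps)
  qed
  finally show ?thesis using lower by linarith
qed

lemma THE_level_ge:
  fixes h :: "real \<Rightarrow> real"
  assumes cont: "continuous_on {0<..} h" and mono: "strict_mono_on {0<..} h"
    and "0 < s" and below: "\<And>x. 0 < x \<Longrightarrow> x < s \<Longrightarrow> h x < c"
    and "0 < b" "c < h b"
  shows "s \<le> (THE x. 0 < x \<and> h x = c)"
proof -
  have "h (s / 2) < c" using below \<open>0 < s\<close> by simp
  moreover have "s / 2 \<le> b" using below[of b] \<open>0 < b\<close> \<open>c < h b\<close> by fastforce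
  moreover have "continuous_on {s / 2..b} h"
    using \<open>0 < s\<close> by (intro continuous_on_subset[OF cont]) auto
  ultimately obtain x0 where x0: "s / 2 \<le> x0" "h x0 = c"
    using IVT'[of h "s / 2" c b] \<open>c < h b\<close> by fastforce
  have "(THE x. 0 < x \<and> h x = c) = x0"
  proof (rule the_equality)
    show "0 < x0 \<and> h x0 = c" using x0 \<open>0 < s\<close> by simp
    show "x = x0" if "0 < x \<and> h x = c" for x
      using strict_mono_on_imp_inj_on[OF mono] that x0 \<open>0 < s\<close> by (auto dest: inj_onD)
  qed
  moreover have "s \<le> x0" using below[of x0] x0 \<open>0 < s\<close> by fastforce
  ultimately show ?thesis by simp
qed

lemma solvable_prob_eq_geom_prob:
  assumes "0 < x" "0 < n"
  shows "solvable_prob V E (inverse (1 + x / n)) = geom_prob V (x / (n + x)) {d. solvable V E d}"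
proof -
  have "inverse (1 + x / n) = 1 - x / (n + x)" using assms by (simp add: field_simps)
  then show ?thesis unfolding solvable_prob_def geom_prob_def by simp
qed

lemma continuous_on_solvable_prob:
  assumes "finite V" "V \<noteq> {}"
  shows "continuous_on {0<..} (\<lambda>x. solvable_prob V E (inverse (1 + x / real (card V))))"
proof -
  have n: "0 < real (card V)" using assms by (simp add: card_gt_0_iff)
  have "continuous_on {0<..} (\<lambda>x. x / (real (card V) + x))" using n by (intro continuous_intros) auto
  moreover have "(\<lambda>x. x / (real (card V) + x)) ` {0<..} \<subseteq> {0<..<1}" using n by auto
  ultimately have "continuous_on {0<..} (\<lambda>x. geom_prob V (x / (real (card V) + x)) {d. solvable V E d})"
    by (rule continuous_on_compose2[OF geom_prob_continuous_on[OF assms(1)]])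
  moreover have "geom_prob V (x / (real (card V) + x)) {d. solvable V E d}
      = solvable_prob V E (inverse (1 + x / real (card V)))" if "x \<in> {0<..}" for x
    using solvable_prob_eq_geom_prob[of x "real (card V)"] n that by simp
  ultimately show ?thesis
    by (rule continuous_on_eq)
qed

lemma strict_mono_on_solvable_prob:
  assumes graph: "is_graph V E" and "V \<noteq> {}"
  shows "strict_mono_on {0<..} (\<lambda>x. solvable_prob V E (inverse (1 + x / real (card V))))"
proof (rule strict_mono_onI)
  define n where "n = real (card V)"
  have fin: "finite V" using graph by (simp add: is_graph_def)
  then have n: "0 < n" using assms unfolding n_def by (simp add: card_gt_0_iff)
  obtain v where "v \<in> V" using \<open>V \<noteq> {}\<close> by blast
  fix x y :: real assume "x \<in> {0<..}" "y \<in> {0<..}" "x < y"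
  then have "x / (n + x) < y / (n + y)" using n by (simp add: field_simps)
  then have "geom_prob V (x / (n + x)) {d. solvable V E d} < geom_prob V (y / (n + y)) {d. solvable V E d}"
    using \<open>x \<in> {0<..}\<close> \<open>y \<in> {0<..}\<close> n not_solvable_at_most_one[OF graph _ \<open>v \<in> V\<close>, of "\<lambda>_. 0"]
    by (intro geom_prob_strict_mono[OF fin upward_closed_solvable, where d = "\<lambda>w. if w \<in> V then 1 else 0"])
       (auto intro: solvable_if_all_pos)
  then show "solvable_prob V E (inverse (1 + x / real (card V)))
      < solvable_prob V E (inverse (1 + y / real (card V)))"
    using solvable_prob_eq_geom_prob n \<open>x \<in> {0<..}\<close> \<open>y \<in> {0<..}\<close> unfolding n_def by simp
qed

lemma solvable_prob_less_half:
  assumes "is_graph V E" "3 \<le> card V" "0 < x" "x\<^sup>2 < real (card V) * ln 2"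
  shows "solvable_prob V E (inverse (1 + x / real (card V))) < 1/2"
proof -
  define q where "q = x / (real (card V) + x)"
  have "0 \<le> q" "q < 1" using assms unfolding q_def by (auto simp: field_simps)
  then have "geom_prob V q {d. solvable V E d} \<le> 1 - ((1 - q\<^sup>2) ^ card V - ((1 - q) * q) ^ card V)"
    using assms(1) by (intro geom_prob_solvable_le)
  also have "\<dots> < 1/2"
    unfolding q_def using assms by (intro solvable_bound_less_half) auto
  finally show ?thesis
    using solvable_prob_eq_geom_prob assms unfolding q_def by simp
qed

lemma solvable_prob_greater_half:
  assumes "finite V" "V \<noteq> {}"
  shows "1/2 < solvable_prob V E (inverse (1 + 2 * real (card V) ^ 2 / real (card V)))"
proof -
  define n where "n = real (card V)"
  define q where "q = 2 * n / (1 + 2 * n)"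
  have n: "1 \<le> n" using assms unfolding n_def by (simp add: Suc_le_eq card_gt_0_iff)
  have q: "0 < q" "q < 1" using n unfolding q_def by (auto simp: field_simps)
  have "1/2 < 1 + n * (q - 1)"
    using n unfolding q_def by (simp add: field_simps)
  also have "\<dots> \<le> q ^ card V"
    using Bernoulli_inequality[of "q - 1" "card V"] q unfolding n_def by simp
  also have "\<dots> \<le> geom_prob V q {d. solvable V E d}"
    using assms q by (intro geom_prob_solvable_ge) auto
  also have "q = (n * (2 * n)) / (n * (1 + 2 * n))"
    using n unfolding q_def by simp
  also have "\<dots> = 2 * n\<^sup>2 / (n + 2 * n\<^sup>2)"
    by (simp add: algebra_simps power2_eq_square)
  finally show ?thesis
    using solvable_prob_eq_geom_prob[of "2 * n\<^sup>2" n] n unfolding n_def by simp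
qed

theorem theorem26:
  shows "\<exists>n1::nat. 1 \<le> n1 \<and>
    (\<forall>V E. is_graph V E \<and> n1 \<le> card V \<longrightarrow>
        sqrt (real (card V) * ln 2) \<le> geom_threshold V E)"
proof (intro exI[of _ 3] conjI allI impI)
  fix V E assume "is_graph V E \<and> 3 \<le> card V"
  then have graph: "is_graph V E" and n: "3 \<le> card V" by auto
  then have V: "finite V" "V \<noteq> {}" by (auto simp: is_graph_def)
  have "sqrt (real (card V) * ln 2) \<le>
      (THE x. 0 < x \<and> solvable_prob V E (inverse (1 + x / real (card V))) = 1/2)"
  proof (rule THE_level_ge[where b = "2 * real (card V) ^ 2"])
    show "solvable_prob V E (inverse (1 + x / real (card V))) < 1/2"
      if "0 < x" "x < sqrt (real (card V) * ln 2)" for x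
      using solvable_prob_less_half[OF graph n \<open>0 < x\<close>] that
        power_strict_mono[of x "sqrt (real (card V) * ln 2)" 2] by simp
  qed (use n V graph solvable_prob_greater_half[OF V, of E] in
      \<open>auto intro: continuous_on_solvable_prob strict_mono_on_solvable_prob\<close>)
  then show "sqrt (real (card V) * ln 2) \<le> geom_threshold V E"
    unfolding geom_threshold_def .
qed simp

end
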